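(* There is a polynomial $p$ such that for every $n>0$ there are finite alphabets $\Sigma_I,\Sigma_O$ and a language $L_n\subseteq(\Sigma_I\times\Sigma_O)^\omega$ recognized by a Streett automaton with costs $\mathcal{A}_n$ of size at most $p(n)$ such that: (i) there is a delay function $f$ for which Player $O$ has a winning strategy $\tau_O$ in $\Gamma_f(L_n)$ with $\mathrm{Cst}(\tau_O)=n$; and (ii) for every delay function $f$, if Player $O$ has a winning strategy $\tau_O$ in $\Gamma_f(L_n)$ with $\mathrm{Cst}(\tau_O)=n$, then $f$ eventually grants a lookahead of size $n\cdot(2^{2^n}-1)$.
   Context: A Streett automaton with costs is a tuple $\mathcal{A}=(Q,\Sigma,q_I,\delta,(Q_j,P_j)_{j\in J},(\mathrm{Cst}_j)_{j\in J})$ with a finite set $Q$ of states, a finite alphabet $\Sigma$, an initial state $q_I$, a deterministic complete transition function $\delta\colon Q\times\Sigma\to Q$, a finite family of Streett pairs $(Q_j,P_j)$ with $Q_j,P_j\subseteq Q$, and for each $j\in J$ a cost function $\mathrm{Cst}_j$ assigning to every transition $(q,a,\delta(q,a))$ either $\epsilon$ or $\mathtt{i}$. Its size is $|Q|+|J|$. The run on $a_0a_1\cdots$ is $\rho=(q_0,a_0,q_1)(q_1,a_1,q_2)\cdots$ with $q_0=q_I$, $q_{m+1}=\delta(q_m,a_m)$. For position $n$, $\mathrm{StCor}_j(\rho,n)=0$ if $q_n\notin Q_j$, and otherwise it is the minimum, over all $n'\ge n$ with $q_{n'}\in P_j$, of the number of transitions among $(q_n,a_n,q_{n+1})\cdots(q_{n'-1},a_{n'-1},q_{n'})$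 that $\mathrm{Cst}_j$ maps to $\mathtt{i}$ ($\min\emptyset=\infty$). Let $\mathrm{StCor}(\rho,n)=\max_{j\in J}\mathrm{StCor}_j(\rho,n)$. The run is accepting if $\limsup_{n\to\infty}\mathrm{StCor}(\rho,n)<\infty$, and $L(\mathcal{A})$ is the set of infinite words whose run is accepting. A delay function is a map $f\colon\mathbb{N}\to\mathbb{N}\setminus\{0\}$; it eventually grants a lookahead of size $m$ if there is an $i$ with $\sum_{0\le i'\le i}(f(i')-1)\ge m$. For $L\subseteq(\Sigma_I\times\Sigma_O)^\omega$, the delay game $\Gamma_f(L)$ is played in rounds $i=0,1,2,\ldots$: in round $i$, Player $I$ picks $u_i\in\Sigma_I^{f(i)}$, then Player $O$ picks $v_i\in\Sigma_O$. Player $O$ wins the play if the outcome, i.e., the word over $\Sigma_I\times\Sigma_O$ pairing $u_0u_1u_2\cdots$ and $v_0v_1v_2\cdots$ letterwise, is in $L$. A strategy for Player $O$ is a map $\tau_O\colon\Sigma_I^*\to\Sigma_O$; a play is consistent with $\tau_O$ if $v_i=\tau_O(u_0\cdots u_i)$ for all $i$; $\tau_O$ is winning if every consistent play is won by Player $O$. For a winning strategy $\tau_O$ in $\Gamma_f(L(\mathcal{A}_n))$, its cost is $\mathrm{Cst}(\tau_O)=\sup_w\limsup_{m\to\infty}\mathrm{StCor}(\rho(w),m)$, where $w$ ranges over outcomes of plays consistent with $\tau_O$ and $\rho(w)$ is the run of $\mathcal{A}_n$ on $w$. *)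

theory Defs
  imports Main "HOL-Library.Extended_Nat" "HOL-Library.Liminf_Limsup"
    "HOL-Computational_Algebra.Polynomial"
begin

text \<open>The cost function of pair j on the transition (q, a, delta q a) is st_cost A j q a,
  where True stands for the increment i and False for epsilon.\<close>

record 'a streett_cost =
  st_states :: "nat set"
  st_alph   :: "'a set"
  st_init   :: nat
  st_delta  :: "nat \<Rightarrow> 'a \<Rightarrow> nat"
  st_pairs  :: "nat set"
  st_Q      :: "nat \<Rightarrow> nat set"
  st_P      :: "nat \<Rightarrow> nat set"
  st_cost   :: "nat \<Rightarrow> nat \<Rightarrow> 'a \<Rightarrow> bool"

definition wf_streett_cost :: "'a streett_cost \<Rightarrow> bool" where
  "wf_streett_cost A \<longleftrightarrow>
     finite (st_states A) \<and> finite (st_alph A) \<and> finite (st_pairs A) \<and>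
     st_init A \<in> st_states A \<and>
     (\<forall>q\<in>st_states A. \<forall>a\<in>st_alph A. st_delta A q a \<in> st_states A) \<and>
     (\<forall>j\<in>st_pairs A. st_Q A j \<subseteq> st_states A \<and> st_P A j \<subseteq> st_states A)"

definition sc_size :: "'a streett_cost \<Rightarrow> nat" where
  "sc_size A = card (st_states A) + card (st_pairs A)"

fun run_state :: "'a streett_cost \<Rightarrow> (nat \<Rightarrow> 'a) \<Rightarrow> nat \<Rightarrow> nat" where
  "run_state A w 0 = st_init A"
| "run_state A w (Suc n) = st_delta A (run_state A w n) (w n)"

definition StCor_j :: "'a streett_cost \<Rightarrow> (nat \<Rightarrow> 'a) \<Rightarrow> nat \<Rightarrow> nat \<Rightarrow> enat" where
  "StCor_j A w j n =
     (if run_state A w n \<notin> st_Q A j then 0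
      else (INF n' \<in> {n'. n \<le> n' \<and> run_state A w n' \<in> st_P A j}.
              enat (card {k \<in> {n..<n'}. st_cost A j (run_state A w k) (w k)})))"

definition StCor :: "'a streett_cost \<Rightarrow> (nat \<Rightarrow> 'a) \<Rightarrow> nat \<Rightarrow> enat" where
  "StCor A w n = (SUP j \<in> st_pairs A. StCor_j A w j n)"

definition run_limsup :: "'a streett_cost \<Rightarrow> (nat \<Rightarrow> 'a) \<Rightarrow> enat" where
  "run_limsup A w = limsup (\<lambda>n. StCor A w n)"

definition sc_lang :: "'a streett_cost \<Rightarrow> (nat \<Rightarrow> 'a) set" where
  "sc_lang A = {w. (\<forall>n. w n \<in> st_alph A) \<and> run_limsup A w < \<infinity>}"

definition delay_fun :: "(nat \<Rightarrow> nat) \<Rightarrow> bool" where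
  "delay_fun f \<longleftrightarrow> (\<forall>i. f i \<noteq> 0)"

definition grants_lookahead :: "(nat \<Rightarrow> nat) \<Rightarrow> nat \<Rightarrow> bool" where
  "grants_lookahead f m \<longleftrightarrow> (\<exists>i. (\<Sum>i'\<le>i. (f i' - 1)) \<ge> m)"

text \<open>A play is determined by the infinite sequence x of letters picked by
  Player I (u_0 u_1 ... = x); in round i Player O answers v_i = tau (u_0 ... u_i), where
  u_0 ... u_i is the prefix of x of length f 0 + ... + f i.\<close>
definition game_outcome :: "(nat \<Rightarrow> nat) \<Rightarrow> ('i list \<Rightarrow> 'o) \<Rightarrow> (nat \<Rightarrow> 'i) \<Rightarrow> nat \<Rightarrow> 'i \<times> 'o" where
  "game_outcome f tau x k = (x k, tau (map x [0..<(\<Sum>i'\<le>k. f i')]))"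

definition game_outcomes :: "'i set \<Rightarrow> (nat \<Rightarrow> nat) \<Rightarrow> ('i list \<Rightarrow> 'o) \<Rightarrow> (nat \<Rightarrow> 'i \<times> 'o) set" where
  "game_outcomes SI f tau = {game_outcome f tau x | x. \<forall>k. x k \<in> SI}"

definition winning_strategy ::
    "'i set \<Rightarrow> (nat \<Rightarrow> nat) \<Rightarrow> (nat \<Rightarrow> 'i \<times> 'o) set \<Rightarrow> ('i list \<Rightarrow> 'o) \<Rightarrow> bool" where
  "winning_strategy SI f L tau \<longleftrightarrow> game_outcomes SI f tau \<subseteq> L"

definition strategy_cost ::
    "('i \<times> 'o) streett_cost \<Rightarrow> 'i set \<Rightarrow> (nat \<Rightarrow> nat) \<Rightarrow> ('i list \<Rightarrow> 'o) \<Rightarrow> enat" where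
  "strategy_cost A SI f tau = (SUP w \<in> game_outcomes SI f tau. run_limsup A w)"

end

theory Submission
  imports Defs
begin

text \<open>Player I plays letters with heights below \<open>N = 2^n + n\<close>, grouped into blocks; a bad
  pair is two letters of equal height with only lower letters between them. At every position
  Player O claims the height of a bad pair in the current block and reports the height of the
  last marked letter. The cost automaton charges every request exactly \<open>n\<close>, plus one when O
  changes a claim although no new block resp. mark justifies it, and sends violations of the
  rules to a sink of infinite cost: a wrong report of a mark, or a block in which Player I
  completed a bad pair starting at a mark while O's claimed bad pair did not occur.

  Every \<open>2^N\<close> letters of a block contain a bad pair, so with lookahead \<open>2^N\<close> Player O can
  claim the first one of each block and never has to change a claim: cost \<open>n\<close>. With less
  lookahead, Player I fills everything O sees at the start of a block with a ruler sequence,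
  which has no bad pair, and then closes a bad pair of a height O did not claim; O must break
  the rules or change a claim, so the cost exceeds \<open>n\<close>. As \<open>n (2^(2^n) - 1) < 2^N\<close> and the
  automaton has \<open>O(n^2)\<close> states and pairs, the theorem follows.\<close>

section \<open>Bad pairs\<close>

definition bad_pair :: "(nat \<Rightarrow> nat) \<Rightarrow> nat \<Rightarrow> nat \<Rightarrow> bool" where
  "bad_pair y a b \<longleftrightarrow> a < b \<and> y a = y b \<and> (\<forall>d. a < d \<and> d < b \<longrightarrow> y d < y a)"

lemma bad_pair_cong: "(\<And>p. p \<le> b \<Longrightarrow> y p = y' p) \<Longrightarrow> bad_pair y a b = bad_pair y' a b"
  unfolding bad_pair_def by (metis less_imp_le_nat order_refl)

lemma bad_pair_of_repeated_max:
  assumes "a < b" "y a = K" "y b = K" "\<And>d. a < d \<Longrightarrow> d < b \<Longrightarrow> y d \<le> K"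
  obtains b' where "b' \<le> b" "bad_pair y a b'"
proof -
  define b' where "b' = (LEAST q. a < q \<and> y q = K)"
  have b': "a < b' \<and> y b' = K" unfolding b'_def by (rule LeastI[of _ b]) (use assms in auto)
  have "b' \<le> b" unfolding b'_def by (rule Least_le) (use assms in auto)
  have "y d < y a" if "a < d" "d < b'" for d
  proof -
    have "y d \<noteq> K" using not_less_Least[of d "\<lambda>q. a < q \<and> y q = K"] that unfolding b'_def by blast
    with assms(2) assms(4)[of d] that \<open>b' \<le> b\<close> show ?thesis by simp
  qed
  with b' \<open>b' \<le> b\<close> assms(2) that show ?thesis unfolding bad_pair_def by auto
qed

text \<open>Pigeonhole for bad pairs: if the top value occurs twice, its first two occurrences form one;
  otherwise it occurs at most once and one side of it is a long interval with fewer values.\<close>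
lemma bad_pair_in_long_interval:
  assumes "2 ^ K \<le> l" "\<And>p. s \<le> p \<Longrightarrow> p < s + l \<Longrightarrow> y p < K"
  shows "\<exists>a b. s \<le> a \<and> b < s + l \<and> bad_pair y a b"
  using assms
proof (induction K arbitrary: s l)
  case 0
  then show ?case using "0.prems"(2)[of s] by simp
next
  case (Suc K)
  show ?case
  proof (cases "\<exists>p q. s \<le> p \<and> p < q \<and> q < s + l \<and> y p = K \<and> y q = K")
    case True
    then obtain p q where pq: "s \<le> p" "p < q" "q < s + l" "y p = K" "y q = K" by blast
    moreover have "y d \<le> K" if "p < d" "d < q" for d using Suc.prems(2)[of d] pq that by simp
    ultimately obtain b where "b \<le> q" "bad_pair y p b" by (metis bad_pair_of_repeated_max)
    with pq show ?thesis by (intro exI[of _ p] exI[of _ b]) auto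
  next
    case False
    have "(0::nat) < 2 ^ Suc K" by simp
    with Suc.prems(1) have "s < s + l" by linarith
    then obtain p where p: "s \<le> p" "p < s + l"
      and below: "\<And>q. s \<le> q \<Longrightarrow> q < s + l \<Longrightarrow> q \<noteq> p \<Longrightarrow> y q < K"
      using False Suc.prems(2) by (metis less_SucE nat_neq_iff le_refl)
    have "2 * 2 ^ K \<le> (p - s) + (s + l - Suc p) + 1" using Suc.prems(1) p by simp
    then consider "2 ^ K \<le> p - s" | "2 ^ K \<le> s + l - Suc p" by linarith
    then show ?thesis
    proof cases
      case 1
      then obtain a b where "s \<le> a" "b < s + (p - s)" "bad_pair y a b"
        using Suc.IH[OF 1, of s] below p by force
      with p show ?thesis by (intro exI[of _ a] exI[of _ b]) auto
    next
      case 2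
      then obtain a b where "Suc p \<le> a" "b < Suc p + (s + l - Suc p)" "bad_pair y a b"
        using Suc.IH[OF 2, of "Suc p"] below p by force
      with p show ?thesis by (intro exI[of _ a] exI[of _ b]) auto
    qed
  qed
qed

lemma multiplicity_two_less:
  assumes "0 < m" "m < 2 ^ K"
  shows "multiplicity (2::nat) m < K"
proof -
  have "2 ^ multiplicity 2 m \<le> m" using multiplicity_dvd[of 2 m] assms(1) by (simp add: dvd_imp_le)
  with assms(2) have "(2::nat) ^ multiplicity 2 m < 2 ^ K" by linarith
  then show ?thesis by simp
qed

text \<open>Between two numbers \<open>2^t u < 2^t v\<close> with \<open>u, v\<close> odd lies \<open>2^t (u + 1)\<close>, which is
  divisible by \<open>2^(t+1)\<close>.\<close>
lemma ruler_no_bad_pair: "\<not> bad_pair (\<lambda>r. multiplicity 2 (Suc r)) a b"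
proof
  assume "bad_pair (\<lambda>r. multiplicity 2 (Suc r)) a b"
  then have ab: "a < b" and tb: "multiplicity 2 (Suc b) = multiplicity (2::nat) (Suc a)"
    and between: "\<And>d. a < d \<Longrightarrow> d < b \<Longrightarrow> multiplicity (2::nat) (Suc d) < multiplicity 2 (Suc a)"
    unfolding bad_pair_def by auto
  define t where "t = multiplicity (2::nat) (Suc a)"
  obtain u where u: "Suc a = 2 ^ t * u" "odd u"
    using multiplicity_decompose'[of "Suc a" 2] unfolding t_def by auto
  obtain v where v: "Suc b = 2 ^ t * v" "odd v"
    using multiplicity_decompose'[of "Suc b" 2] unfolding t_def tb by auto
  have "u < v" using ab u v by (metis Suc_less_eq mult_less_cancel1)
  with u v have "Suc u < v" by (metis Suc_lessI even_Suc)
  define m where "m = 2 ^ t * Suc u"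
  have m: "Suc a < m" "m < Suc b"
    unfolding m_def u(1) v(1) using \<open>Suc u < v\<close> by (intro mult_strict_left_mono; simp)+
  have "2 ^ Suc t dvd m" using u(2) unfolding m_def by (auto elim!: oddE)
  then have "Suc t \<le> multiplicity 2 m" using m(1) by (intro multiplicity_geI) auto
  moreover have "multiplicity 2 (Suc (m - 1)) < t" using between[of "m - 1"] m unfolding t_def by simp
  ultimately show False using m(1) by simp
qed

definition open_height :: "(nat \<Rightarrow> nat) \<Rightarrow> nat \<Rightarrow> nat \<Rightarrow> nat \<Rightarrow> bool" where
  "open_height y s c J \<longleftrightarrow> (\<exists>a. s \<le> a \<and> a \<le> c \<and> y a = J \<and> (\<forall>d. a < d \<and> d \<le> c \<longrightarrow> y d < J))"

lemma open_height_self: "s \<le> c \<Longrightarrow> open_height y s c (y c)"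
  unfolding open_height_def by auto

lemma open_height_Suc:
  assumes "open_height y s c J" "y (Suc c) < J"
  shows "open_height y s (Suc c) J"
proof -
  obtain a where "s \<le> a" "a \<le> c" "y a = J" "\<forall>d. a < d \<and> d \<le> c \<longrightarrow> y d < J"
    using assms(1) unfolding open_height_def by blast
  with assms(2) show ?thesis unfolding open_height_def by (intro exI[of _ a]) (auto simp: le_Suc_eq)
qed

lemma bad_pair_of_open_height:
  assumes "open_height y s c J" "y (Suc c) = J"
  shows "\<exists>a\<ge>s. bad_pair y a (Suc c)"
proof -
  obtain a where "s \<le> a" "a \<le> c" "y a = J" "\<forall>d. a < d \<and> d \<le> c \<longrightarrow> y d < J"
    using assms(1) unfolding open_height_def by blast
  with assms(2) show ?thesis unfolding bad_pair_def by (auto simp: less_Suc_eq_le)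
qed

text \<open>An input letter \<open>4 h + 2 m + s\<close> has height \<open>h\<close> and
  carries a mark bit \<open>m\<close> and a block-start bit \<open>s\<close>; an output letter \<open>j * num_heights n + k\<close>
  claims that a bad pair of height \<open>j\<close> occurs in the current block and that the last mark
  had height \<open>k\<close>.\<close>

definition num_heights :: "nat \<Rightarrow> nat" where "num_heights n = 2 ^ n + n"
definition num_bits :: "nat \<Rightarrow> nat" where "num_bits n = n + 1"
definition period :: "nat \<Rightarrow> nat" where "period n = n + 2"
definition sink :: "nat \<Rightarrow> nat" where "sink n = 16 * period n"
definition sink_pair :: "nat \<Rightarrow> nat" where "sink_pair n = 4 * num_bits n * period n"

definition height :: "nat \<Rightarrow> nat" where "height i = i div 4"
definition is_mark :: "nat \<Rightarrow> bool" where "is_mark i \<longleftrightarrow> odd (i div 2)"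
definition is_block_start :: "nat \<Rightarrow> bool" where "is_block_start i \<longleftrightarrow> odd i"
definition pair_claim :: "nat \<Rightarrow> nat \<Rightarrow> nat" where "pair_claim n v = v div num_heights n"
definition mark_claim :: "nat \<Rightarrow> nat \<Rightarrow> nat" where "mark_claim n v = v mod num_heights n"

text \<open>\<open>o_open\<close>: the last letter of height \<open>j\<close> in this block was followed by lower letters only;
  \<open>o_found\<close>: a bad pair of height \<open>j\<close> has occurred in this block. \<open>i_open\<close> and \<open>i_found\<close> say
  the same for the height \<open>k\<close>, starting from the last mark.\<close>
record flags =
  o_open :: bool
  o_found :: bool
  i_open :: bool
  i_found :: bool

fun flags_step :: "nat \<Rightarrow> flags \<Rightarrow> nat \<times> nat \<Rightarrow> flags" where
  "flags_step n F (i, v) =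
     \<lparr>o_open = (height i = pair_claim n v \<or>
                 (height i < pair_claim n v \<and> \<not> is_block_start i \<and> o_open F)),
      o_found = (\<not> is_block_start i \<and> (o_found F \<or> (height i = pair_claim n v \<and> o_open F))),
      i_open = (is_mark i \<or> (\<not> is_block_start i \<and> i_open F \<and> height i < mark_claim n v)),
      i_found = (\<not> is_block_start i \<and>
                 (i_found F \<or> (\<not> is_mark i \<and> i_open F \<and> height i = mark_claim n v)))\<rparr>"

fun violation :: "nat \<Rightarrow> flags \<Rightarrow> nat \<times> nat \<Rightarrow> bool" where
  "violation n F (i, v) \<longleftrightarrow>
     (is_mark i \<and> mark_claim n v \<noteq> height i) \<or> (is_block_start i \<and> i_found F \<and> \<not> o_found F)"

definition flags_code :: "flags \<Rightarrow> nat" where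
  "flags_code F = of_bool (o_open F) + 2 * of_bool (o_found F) + 4 * of_bool (i_open F)
     + 8 * of_bool (i_found F)"

definition flags_decode :: "nat \<Rightarrow> flags" where
  "flags_decode m = \<lparr>o_open = odd m, o_found = odd (m div 2), i_open = odd (m div 4),
     i_found = odd (m div 8)\<rparr>"

lemma flags_decode_code [simp]: "flags_decode (flags_code F) = F"
  by (cases F) (auto simp: flags_code_def flags_decode_def)

lemma flags_code_less: "flags_code F < 16"
  by (auto simp: flags_code_def)

text \<open>A live state stores the position modulo \<open>period n\<close> and, above it, the flags.\<close>
definition cost_delta :: "nat \<Rightarrow> nat \<Rightarrow> nat \<times> nat \<Rightarrow> nat" where
  "cost_delta n q a =
     (if sink n \<le> q \<or> violation n (flags_decode (q div period n)) a then sink n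
      else Suc (q mod period n) mod period n
             + period n * flags_code (flags_step n (flags_decode (q div period n)) a))"

definition pair_index :: "nat \<Rightarrow> nat \<Rightarrow> nat \<Rightarrow> bool \<Rightarrow> bool \<Rightarrow> nat" where
  "pair_index n ph i b m = ph + period n * (i + num_bits n * (of_bool b + 2 * of_bool m))"

definition pair_phase :: "nat \<Rightarrow> nat \<Rightarrow> nat" where "pair_phase n e = e mod period n"
definition pair_bit :: "nat \<Rightarrow> nat \<Rightarrow> nat" where "pair_bit n e = e div period n mod num_bits n"
definition pair_bit_value :: "nat \<Rightarrow> nat \<Rightarrow> bool" where
  "pair_bit_value n e \<longleftrightarrow> odd (e div period n div num_bits n)"
definition pair_watches_mark :: "nat \<Rightarrow> nat \<Rightarrow> bool" where
  "pair_watches_mark n e \<longleftrightarrow> 2 \<le> e div period n div num_bits n"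

definition watched_claim :: "nat \<Rightarrow> nat \<Rightarrow> nat \<times> nat \<Rightarrow> nat" where
  "watched_claim n e a = (if pair_watches_mark n e then mark_claim n (snd a) else pair_claim n (snd a))"

definition change_allowed :: "nat \<Rightarrow> nat \<Rightarrow> nat \<times> nat \<Rightarrow> bool" where
  "change_allowed n e a \<longleftrightarrow> (if pair_watches_mark n e then is_mark (fst a) else is_block_start (fst a))"

definition request_states :: "nat \<Rightarrow> nat \<Rightarrow> nat set" where
  "request_states n e =
     (if e = sink_pair n then {sink n} else {q. q < sink n \<and> q mod period n = pair_phase n e})"

definition response_states :: "nat \<Rightarrow> nat \<Rightarrow> nat set" where
  "response_states n e =
     (if e = sink_pair n then {}
      else {q. q < sink n \<and> q mod period n = (pair_phase n e + n + 1) mod period n})"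

text \<open>A request of pair \<open>e\<close> is answered \<open>n + 1\<close> steps later. Of these steps, the steps \<open>2..n\<close>
  always cost, step 0 costs if the watched bit of the claim has value \<open>pair_bit_value n e\<close>,
  and step 1 costs if that bit then flips although the letter does not allow a change. So the
  most expensive request at a position costs \<open>n + 1\<close> if Player O changes a claim there
  unjustifiably and \<open>n\<close> otherwise. The extra pair \<open>sink_pair n\<close> makes the sink cost \<open>\<infinity>\<close>.\<close>
definition pair_cost :: "nat \<Rightarrow> nat \<Rightarrow> nat \<Rightarrow> nat \<times> nat \<Rightarrow> bool" where
  "pair_cost n e q a \<longleftrightarrow> e < sink_pair n \<and> q < sink n \<and>
     (let d = (q mod period n + period n - pair_phase n e) mod period n;
          flip = bit (watched_claim n e a) (pair_bit n e) \<noteq> pair_bit_value n e in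
      (d = 0 \<and> \<not> flip) \<or> (d = 1 \<and> flip \<and> \<not> change_allowed n e a) \<or> (2 \<le> d \<and> d \<le> n))"

definition cost_aut :: "nat \<Rightarrow> (nat \<times> nat) streett_cost" where
  "cost_aut n = \<lparr>st_states = {..sink n},
     st_alph = {..<4 * num_heights n} \<times> {..<num_heights n * num_heights n}, st_init = 0,
     st_delta = cost_delta n, st_pairs = {..sink_pair n}, st_Q = request_states n,
     st_P = response_states n, st_cost = pair_cost n\<rparr>"

lemma cost_aut_simps [simp]:
  "st_states (cost_aut n) = {..sink n}"
  "st_alph (cost_aut n) = {..<4 * num_heights n} \<times> {..<num_heights n * num_heights n}"
  "st_init (cost_aut n) = 0" "st_delta (cost_aut n) = cost_delta n"
  "st_pairs (cost_aut n) = {..sink_pair n}" "st_Q (cost_aut n) = request_states n"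
  "st_P (cost_aut n) = response_states n" "st_cost (cost_aut n) = pair_cost n"
  by (simp_all add: cost_aut_def)

lemma period_pos: "0 < period n"
  by (simp add: period_def)

lemma live_state_less_sink: "c mod period n + period n * flags_code F < sink n"
proof -
  have "c mod period n < period n" using period_pos by simp
  moreover have "period n * flags_code F \<le> period n * 15"
    using flags_code_less[of F] by simp
  ultimately show ?thesis unfolding sink_def by linarith
qed

lemma wf_cost_aut: "wf_streett_cost (cost_aut n)"
  unfolding wf_streett_cost_def
  using live_state_less_sink[of "Suc _" n]
  by (auto simp: cost_delta_def request_states_def response_states_def less_imp_le)

lemma cost_aut_size: "sc_size (cost_aut n) \<le> poly [:42, 28, 4:] n"
  by (simp add: sc_size_def sink_def sink_pair_def period_def num_bits_def algebra_simps)

primrec flags_run :: "nat \<Rightarrow> (nat \<Rightarrow> nat \<times> nat) \<Rightarrow> nat \<Rightarrow> flags" where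
  "flags_run n w 0 = \<lparr>o_open = False, o_found = False, i_open = False, i_found = False\<rparr>"
| "flags_run n w (Suc c) = flags_step n (flags_run n w c) (w c)"

definition failed :: "nat \<Rightarrow> (nat \<Rightarrow> nat \<times> nat) \<Rightarrow> nat \<Rightarrow> bool" where
  "failed n w c \<longleftrightarrow> (\<exists>d<c. violation n (flags_run n w d) (w d))"

lemma failed_mono: "failed n w c \<Longrightarrow> c \<le> c' \<Longrightarrow> failed n w c'"
  unfolding failed_def by (meson less_le_trans)

lemma run_state_cost_aut:
  "run_state (cost_aut n) w c =
     (if failed n w c then sink n else c mod period n + period n * flags_code (flags_run n w c))"
proof (induction c)
  case 0
  then show ?case by (simp add: failed_def flags_code_def)
next
  case (Suc c)
  show ?case
  proof (cases "failed n w c")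
    case True
    then show ?thesis using Suc failed_mono[of n w c "Suc c"] by (simp add: cost_delta_def)
  next
    case False
    then have "failed n w (Suc c) \<longleftrightarrow> violation n (flags_run n w c) (w c)"
      by (auto simp: failed_def less_Suc_eq)
    with False Suc live_state_less_sink[of c n "flags_run n w c"] period_pos[of n] show ?thesis
      by (simp add: cost_delta_def mod_Suc_eq not_le)
  qed
qed

section \<open>Costs of runs\<close>

definition unjustified_change :: "nat \<Rightarrow> (nat \<Rightarrow> nat \<times> nat) \<Rightarrow> nat \<Rightarrow> bool" where
  "unjustified_change n w c \<longleftrightarrow>
     (pair_claim n (snd (w c)) \<noteq> pair_claim n (snd (w (Suc c))) \<and> \<not> is_block_start (fst (w (Suc c)))) \<or>
     (mark_claim n (snd (w c)) \<noteq> mark_claim n (snd (w (Suc c))) \<and> \<not> is_mark (fst (w (Suc c))))"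

lemma live_state_request_iff:
  assumes "\<not> failed n w c" "e < sink_pair n"
  shows "run_state (cost_aut n) w c \<in> request_states n e \<longleftrightarrow> c mod period n = pair_phase n e"
  using assms live_state_less_sink[of c n "flags_run n w c"]
  by (simp add: run_state_cost_aut request_states_def)

lemma live_state_response_iff:
  assumes "\<not> failed n w c" "e < sink_pair n"
  shows "run_state (cost_aut n) w c \<in> response_states n e \<longleftrightarrow>
           c mod period n = (pair_phase n e + n + 1) mod period n"
  using assms live_state_less_sink[of c n "flags_run n w c"]
  by (simp add: run_state_cost_aut response_states_def)

lemma mod_add_diff_mod:
  fixes P :: nat
  assumes "t < P"
  shows "((c + t) mod P + P - c mod P) mod P = t"
proof -
  define r where "r = c mod P"
  have "r < P" using assms unfolding r_def by simp
  have "(c + t) mod P = (r + t) mod P" by (simp add: r_def mod_add_left_eq)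
  moreover have "(r + t) mod P = (if r + t < P then r + t else r + t - P)"
    using \<open>r < P\<close> assms by (simp add: mod_if)
  ultimately show ?thesis using \<open>r < P\<close> assms by (auto simp: r_def[symmetric])
qed

lemma le_of_mod_eq_add:
  fixes P :: nat
  assumes "c \<le> m" "m mod P = (c + d) mod P" "d < P"
  shows "c + d \<le> m"
proof (rule ccontr)
  assume less: "\<not> c + d \<le> m"
  have "(c + d) mod P = m mod P" using assms(2) by simp
  then have "P dvd c + d - m" using less by (subst mod_eq_dvd_iff_nat[symmetric]) auto
  moreover have "0 < c + d - m" "c + d - m < P" using less assms(1,3) by auto
  ultimately show False by (simp add: dvd_imp_le leD)
qed

lemma card_filter_interval:
  assumes "1 \<le> n" "\<And>t. 2 \<le> t \<Longrightarrow> t \<le> n \<Longrightarrow> C (c + t)"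
  shows "card {k \<in> {c..<c + n + 1}. C k} = of_bool (C c) + of_bool (C (Suc c)) + (n - 1)"
proof -
  have "C k" if "c + 2 \<le> k" "k < c + n + 1" for k using assms(2)[of "k - c"] that by simp
  then have "{k \<in> {c..<c + n + 1}. C k} = {k \<in> {c, Suc c}. C k} \<union> {c + 2..<c + n + 1}"
    using assms(1) by auto
  moreover have "{k \<in> {c, Suc c}. C k} =
      (if C c then {c} else {}) \<union> (if C (Suc c) then {Suc c} else {})" by auto
  then have "card {k \<in> {c, Suc c}. C k} = of_bool (C c) + of_bool (C (Suc c))"
    by (cases "C c"; cases "C (Suc c)") auto
  moreover have "{k \<in> {c, Suc c}. C k} \<inter> {c + 2..<c + n + 1} = {}" by auto
  ultimately show ?thesis using assms(1) by (simp add: card_Un_disjoint)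
qed

lemma StCor_j_live:
  assumes nf: "\<And>c. \<not> failed n w c" and e: "e < sink_pair n"
  shows "StCor_j (cost_aut n) w e c =
    (if c mod period n = pair_phase n e
     then enat (card {k \<in> {c..<c + n + 1}. pair_cost n e (run_state (cost_aut n) w k) (w k)})
     else 0)"
proof (cases "c mod period n = pair_phase n e")
  case False
  then show ?thesis using live_state_request_iff[OF nf e, of c] by (simp add: StCor_j_def)
next
  case True
  define g where "g m = enat (card {k \<in> {c..<m}. pair_cost n e (run_state (cost_aut n) w k) (w k)})" for m
  define S where "S = {m. c \<le> m \<and> run_state (cost_aut n) w m \<in> response_states n e}"
  have "(pair_phase n e + n + 1) mod period n = (c + n + 1) mod period n"
    using True by (metis mod_add_left_eq)
  then have S: "S = {m. c \<le> m \<and> m mod period n = (c + n + 1) mod period n}"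
    unfolding S_def live_state_response_iff[OF nf e] by simp
  have "c + n + 1 \<in> S" unfolding S by simp
  moreover have "g (c + n + 1) \<le> g m" if "m \<in> S" for m
  proof -
    have "c + (n + 1) \<le> m"
      using that le_of_mod_eq_add[of c m "period n" "n + 1"] unfolding S by (simp add: period_def)
    then show ?thesis unfolding g_def by (auto intro!: card_mono)
  qed
  ultimately have "(INF m \<in> S. g m) = g (c + n + 1)"
    by (metis (no_types, lifting) INF_greatest INF_lower antisym)
  then show ?thesis using True live_state_request_iff[OF nf e, of c]
    by (simp add: StCor_j_def S_def g_def)
qed

lemma StCor_j_live_request:
  assumes nf: "\<And>c. \<not> failed n w c" and e: "e < sink_pair n" and n: "1 \<le> n"
    and ph: "c mod period n = pair_phase n e"
  shows "StCor_j (cost_aut n) w e c = enat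
     (of_bool (bit (watched_claim n e (w c)) (pair_bit n e) = pair_bit_value n e) +
      of_bool (bit (watched_claim n e (w (Suc c))) (pair_bit n e) \<noteq> pair_bit_value n e
               \<and> \<not> change_allowed n e (w (Suc c))) + (n - 1))"
proof -
  have cost: "pair_cost n e (run_state (cost_aut n) w (c + t)) (w (c + t)) \<longleftrightarrow>
     (t = 0 \<and> bit (watched_claim n e (w (c + t))) (pair_bit n e) = pair_bit_value n e) \<or>
     (t = 1 \<and> bit (watched_claim n e (w (c + t))) (pair_bit n e) \<noteq> pair_bit_value n e
            \<and> \<not> change_allowed n e (w (c + t))) \<or> (2 \<le> t \<and> t \<le> n)" if "t \<le> n" for t
  proof -
    have "t < period n" using that by (simp add: period_def)
    then have "((c + t) mod period n + period n - pair_phase n e) mod period n = t"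
      using mod_add_diff_mod[of t "period n" c] ph by simp
    then show ?thesis using e live_state_less_sink[of "c + t" n "flags_run n w (c + t)"] nf
      by (auto simp: pair_cost_def run_state_cost_aut Let_def)
  qed
  show ?thesis
    using StCor_j_live[OF nf e, of c] ph n cost[of 0] cost[of 1]
      card_filter_interval[OF n, of "\<lambda>k. pair_cost n e (run_state (cost_aut n) w k) (w k)" c]
    by (simp add: cost)
qed

lemma pair_index_decode:
  fixes b m :: bool
  assumes "ph < period n" "i < num_bits n"
  defines "e \<equiv> pair_index n ph i b m"
  shows "e < sink_pair n" "pair_phase n e = ph" "pair_bit n e = i" "pair_bit_value n e = b"
    "pair_watches_mark n e = m"
proof -
  have code: "e div period n = i + num_bits n * (of_bool b + 2 * of_bool m)"
    "e mod period n = ph"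
    using assms period_pos[of n] by (simp_all add: e_def pair_index_def)
  have high: "e div period n div num_bits n = of_bool b + 2 * of_bool m"
    using assms(2) by (simp add: code)
  show "pair_phase n e = ph" "pair_bit n e = i" "pair_bit_value n e = b"
    "pair_watches_mark n e = m"
    using assms(2) by (simp_all add: pair_phase_def pair_bit_def pair_bit_value_def
        pair_watches_mark_def code high)
  have "e div period n < 4 * num_bits n"
    using assms(2) unfolding code by (cases b; cases m) auto
  then show "e < sink_pair n"
    unfolding sink_pair_def by (metis div_less_iff_less_mult period_pos)
qed

lemma bit_differs_below:
  fixes a b :: nat
  assumes "a < 2 ^ k" "b < 2 ^ k" "a \<noteq> b"
  obtains i where "i < k" "bit a i \<noteq> bit b i"
proof -
  have "take_bit k a \<noteq> take_bit k b" using assms by (simp add: take_bit_nat_eq_self)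
  then show ?thesis using that by (auto simp: bit_eq_iff bit_take_bit_iff)
qed

lemma claims_less:
  assumes "v < num_heights n * num_heights n"
  shows "pair_claim n v < 2 ^ num_bits n" "mark_claim n v < 2 ^ num_bits n"
proof -
  have "n < 2 ^ n" by (rule less_exp)
  then have N: "num_heights n < 2 ^ num_bits n" by (simp add: num_heights_def num_bits_def)
  have "0 < num_heights n" by (simp add: num_heights_def)
  then have "pair_claim n v < num_heights n" "mark_claim n v < num_heights n"
    using assms by (simp_all add: pair_claim_def mark_claim_def less_mult_imp_div_less)
  with N show "pair_claim n v < 2 ^ num_bits n" "mark_claim n v < 2 ^ num_bits n" by simp_all
qed

lemma costly_pair:
  assumes range: "\<And>c. snd (w c) < num_heights n * num_heights n"
  obtains e where "e < sink_pair n" "pair_phase n e = c mod period n"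
    "bit (watched_claim n e (w c)) (pair_bit n e) = pair_bit_value n e"
    "unjustified_change n w c \<Longrightarrow>
       bit (watched_claim n e (w (Suc c))) (pair_bit n e) \<noteq> pair_bit_value n e
       \<and> \<not> change_allowed n e (w (Suc c))"
proof -
  define claim :: "bool \<Rightarrow> nat \<times> nat \<Rightarrow> nat"
    where "claim m a = (if m then mark_claim n (snd a) else pair_claim n (snd a))" for m a
  obtain m i where i: "i < num_bits n" and flip: "unjustified_change n w c \<Longrightarrow>
      bit (claim m (w c)) i \<noteq> bit (claim m (w (Suc c))) i \<and>
      \<not> (if m then is_mark (fst (w (Suc c))) else is_block_start (fst (w (Suc c))))"
  proof (cases "unjustified_change n w c")
    case False
    then show ?thesis using that[of 0] by (simp add: num_bits_def)
  next
    case True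
    then consider (pair) "pair_claim n (snd (w c)) \<noteq> pair_claim n (snd (w (Suc c)))"
        "\<not> is_block_start (fst (w (Suc c)))"
      | (mark) "mark_claim n (snd (w c)) \<noteq> mark_claim n (snd (w (Suc c)))"
        "\<not> is_mark (fst (w (Suc c)))"
      unfolding unjustified_change_def by blast
    then show ?thesis
    proof cases
      case pair
      with claims_less(1)[OF range] obtain i where "i < num_bits n"
        "bit (pair_claim n (snd (w c))) i \<noteq> bit (pair_claim n (snd (w (Suc c)))) i"
        by (metis bit_differs_below)
      with pair show ?thesis using that[of i False] by (simp add: claim_def)
    next
      case mark
      with claims_less(2)[OF range] obtain i where "i < num_bits n"
        "bit (mark_claim n (snd (w c))) i \<noteq> bit (mark_claim n (snd (w (Suc c)))) i"
        by (metis bit_differs_below)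
      with mark show ?thesis using that[of i True] by (simp add: claim_def)
    qed
  qed
  have "c mod period n < period n" using period_pos by simp
  note e = pair_index_decode[OF this i, where b = "bit (claim m (w c)) i" and m = m]
  show ?thesis
    by (rule that[OF e(1,2)]) (use e flip in \<open>auto simp: watched_claim_def change_allowed_def claim_def\<close>)
qed

lemma unjustified_change_of_flip:
  assumes "bit (watched_claim n e (w c)) i = b" "bit (watched_claim n e (w (Suc c))) i \<noteq> b"
    and "\<not> change_allowed n e (w (Suc c))"
  shows "unjustified_change n w c"
proof -
  have "watched_claim n e (w c) \<noteq> watched_claim n e (w (Suc c))" using assms(1,2) by auto
  with assms(3) show ?thesis
    by (cases "pair_watches_mark n e") (simp_all add: unjustified_change_def watched_claim_def
        change_allowed_def)
qed

lemma StCor_j_live_le: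
  assumes nf: "\<And>c. \<not> failed n w c" and n: "1 \<le> n" and e: "e \<le> sink_pair n"
  shows "StCor_j (cost_aut n) w e c \<le> enat (n + of_bool (unjustified_change n w c))"
proof (cases "e = sink_pair n")
  case True
  then show ?thesis using nf live_state_less_sink[of c n "flags_run n w c"]
    by (simp add: StCor_j_def request_states_def run_state_cost_aut)
next
  case False
  with e have e: "e < sink_pair n" by simp
  show ?thesis
  proof (cases "c mod period n = pair_phase n e")
    case True
    define A where "A \<longleftrightarrow> bit (watched_claim n e (w c)) (pair_bit n e) = pair_bit_value n e"
    define B where "B \<longleftrightarrow> bit (watched_claim n e (w (Suc c))) (pair_bit n e) \<noteq> pair_bit_value n e
      \<and> \<not> change_allowed n e (w (Suc c))"
    have "unjustified_change n w c" if A B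
    proof (rule unjustified_change_of_flip)
      show "bit (watched_claim n e (w c)) (pair_bit n e) = pair_bit_value n e"
        using \<open>A\<close> unfolding A_def .
      show "bit (watched_claim n e (w (Suc c))) (pair_bit n e) \<noteq> pair_bit_value n e"
        and "\<not> change_allowed n e (w (Suc c))" using \<open>B\<close> unfolding B_def by simp_all
    qed
    then have "of_bool A + of_bool B + (n - 1) \<le> n + of_bool (unjustified_change n w c)"
      using n by (cases A; cases B) simp_all
    then show ?thesis using StCor_j_live_request[OF nf e n True] by (simp add: A_def B_def)
  qed (simp add: StCor_j_live[OF nf e])
qed

lemma StCor_live:
  assumes nf: "\<And>c. \<not> failed n w c" and n: "1 \<le> n"
    and range: "\<And>c. snd (w c) < num_heights n * num_heights n"
  shows "StCor (cost_aut n) w c = enat (n + of_bool (unjustified_change n w c))"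
proof (rule antisym)
  show "StCor (cost_aut n) w c \<le> enat (n + of_bool (unjustified_change n w c))"
    unfolding StCor_def using StCor_j_live_le[OF nf n] by (intro SUP_least) simp
next
  obtain e where e: "e < sink_pair n" "pair_phase n e = c mod period n"
    "bit (watched_claim n e (w c)) (pair_bit n e) = pair_bit_value n e"
    "unjustified_change n w c \<Longrightarrow>
       bit (watched_claim n e (w (Suc c))) (pair_bit n e) \<noteq> pair_bit_value n e
       \<and> \<not> change_allowed n e (w (Suc c))"
    using costly_pair[where w = w and c = c, OF range] by blast
  have "enat (n + of_bool (unjustified_change n w c)) \<le> StCor_j (cost_aut n) w e c"
    unfolding StCor_j_live_request[OF nf e(1) n e(2)[symmetric]]
    using e(3,4) n by (cases "unjustified_change n w c") simp_all
  also have "\<dots> \<le> StCor (cost_aut n) w c"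
    unfolding StCor_def using e(1) by (intro SUP_upper) simp
  finally show "enat (n + of_bool (unjustified_change n w c)) \<le> StCor (cost_aut n) w c" .
qed

lemma StCor_failed:
  assumes "failed n w c"
  shows "StCor (cost_aut n) w c = \<infinity>"
proof -
  have "StCor_j (cost_aut n) w (sink_pair n) c = \<infinity>"
    using assms by (simp add: StCor_j_def request_states_def response_states_def
        run_state_cost_aut top_enat_def)
  moreover have "StCor_j (cost_aut n) w (sink_pair n) c \<le> StCor (cost_aut n) w c"
    unfolding StCor_def by (rule SUP_upper) auto
  ultimately show ?thesis by (simp add: top_enat_def[symmetric] top_unique)
qed

lemma run_limsup_failed:
  assumes "failed n w c0"
  shows "run_limsup (cost_aut n) w = \<infinity>"
proof -
  have "eventually (\<lambda>c. \<infinity> \<le> StCor (cost_aut n) w c) sequentially"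
    unfolding eventually_sequentially
    using StCor_failed failed_mono[OF assms] by (intro exI[of _ c0]) auto
  then have "\<infinity> \<le> run_limsup (cost_aut n) w"
    unfolding run_limsup_def by (intro le_Limsup) auto
  then show ?thesis by (simp add: top_enat_def[symmetric] top_unique)
qed

lemma run_limsup_steady:
  assumes "\<And>c. \<not> failed n w c" "1 \<le> n" "\<And>c. snd (w c) < num_heights n * num_heights n"
    and "\<And>c. \<not> unjustified_change n w c"
  shows "run_limsup (cost_aut n) w = enat n"
  using StCor_live[OF assms(1-3)] assms(4) by (simp add: run_limsup_def Limsup_const)

lemma run_limsup_unsteady:
  assumes nf: "\<And>c. \<not> failed n w c" and n: "1 \<le> n"
    and range: "\<And>c. snd (w c) < num_heights n * num_heights n"
    and often: "\<And>c0. \<exists>c\<ge>c0. unjustified_change n w c"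
  shows "enat (Suc n) \<le> run_limsup (cost_aut n) w"
  unfolding run_limsup_def
proof (rule Limsup_greatest)
  fix P assume "eventually P sequentially"
  then obtain N where N: "\<And>c. N \<le> c \<Longrightarrow> P c" unfolding eventually_sequentially by blast
  obtain c where c: "N \<le> c" "unjustified_change n w c" using often by blast
  have "enat (Suc n) = StCor (cost_aut n) w c" using StCor_live[OF nf n range, of c] c(2) by simp
  also have "\<dots> \<le> Sup ((\<lambda>c. StCor (cost_aut n) w c) ` Collect P)"
    by (rule Sup_upper) (use N c in auto)
  finally show "enat (Suc n) \<le> Sup ((\<lambda>c. StCor (cost_aut n) w c) ` Collect P)" .
qed

section \<open>Lookahead \<open>2^N\<close> suffices\<close>

lemma height_less: "i < 4 * num_heights n \<Longrightarrow> height i < num_heights n"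
  by (simp add: height_def less_mult_imp_div_less mult.commute)

definition block_start :: "(nat \<Rightarrow> nat) \<Rightarrow> nat \<Rightarrow> nat" where
  "block_start x c = (GREATEST s. s \<le> c \<and> (s = 0 \<or> is_block_start (x s)))"

definition ends_bad_pair :: "nat \<Rightarrow> (nat \<Rightarrow> nat) \<Rightarrow> nat \<Rightarrow> nat \<Rightarrow> bool" where
  "ends_bad_pair n x s b \<longleftrightarrow> b < s + 2 ^ num_heights n \<and>
     (\<forall>t. s < t \<and> t \<le> b \<longrightarrow> \<not> is_block_start (x t)) \<and> (\<exists>a\<ge>s. bad_pair (\<lambda>p. height (x p)) a b)"

text \<open>If a block contains a bad pair, then one ends among its first \<open>2 ^ num_heights n\<close> letters
  (\<open>bad_pair_in_long_interval\<close>), so with this lookahead Player O can claim it at the block start.\<close>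
definition honest_pair_claim :: "nat \<Rightarrow> (nat \<Rightarrow> nat) \<Rightarrow> nat \<Rightarrow> nat" where
  "honest_pair_claim n x c =
     (if \<exists>b. ends_bad_pair n x (block_start x c) b
      then height (x (LEAST b. ends_bad_pair n x (block_start x c) b)) else 0)"

definition last_mark_height :: "(nat \<Rightarrow> nat) \<Rightarrow> nat \<Rightarrow> nat" where
  "last_mark_height x c =
     (if \<exists>t\<le>c. is_mark (x t) then height (x (GREATEST t. t \<le> c \<and> is_mark (x t))) else 0)"

definition honest_answer :: "nat \<Rightarrow> (nat \<Rightarrow> nat) \<Rightarrow> nat \<Rightarrow> nat" where
  "honest_answer n x c = honest_pair_claim n x c * num_heights n + last_mark_height x c"

text \<open>The prefix seen in round \<open>c\<close> has length \<open>c + 2 ^ num_heights n\<close>.\<close>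
definition honest_strategy :: "nat \<Rightarrow> nat list \<Rightarrow> nat" where
  "honest_strategy n xs = honest_answer n (\<lambda>p. xs ! p) (length xs - 2 ^ num_heights n)"

definition honest_delay :: "nat \<Rightarrow> nat \<Rightarrow> nat" where
  "honest_delay n i = (if i = 0 then 2 ^ num_heights n else 1)"

lemma block_start_le: "block_start x c \<le> c"
  and block_start_starts: "block_start x c = 0 \<or> is_block_start (x (block_start x c))"
proof -
  have "block_start x c \<le> c \<and> (block_start x c = 0 \<or> is_block_start (x (block_start x c)))"
    unfolding block_start_def by (rule GreatestI_nat[of _ 0 c]) auto
  then show "block_start x c \<le> c" "block_start x c = 0 \<or> is_block_start (x (block_start x c))"
    by auto
qed

lemma block_start_greatest: "s \<le> c \<Longrightarrow> s = 0 \<or> is_block_start (x s) \<Longrightarrow> s \<le> block_start x c"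
  unfolding block_start_def by (rule Greatest_le_nat[of _ _ c]) auto

lemma not_block_start_after_block_start:
  "block_start x c < t \<Longrightarrow> t \<le> c \<Longrightarrow> \<not> is_block_start (x t)"
  using block_start_greatest[of t c x] by auto

lemma block_start_eq: "block_start x c \<le> d \<Longrightarrow> d \<le> c \<Longrightarrow> block_start x d = block_start x c"
proof -
  assume d: "block_start x c \<le> d" "d \<le> c"
  have "block_start x c \<le> block_start x d"
    using block_start_greatest[of "block_start x c" d x, OF d(1) block_start_starts[of x c]] .
  moreover have "block_start x d \<le> block_start x c"
    using block_start_greatest[of "block_start x d" c x] block_start_starts[of x d]
      block_start_le[of x d] d(2) by linarith
  ultimately show ?thesis by simp
qed

lemma block_start_Suc: "\<not> is_block_start (x (Suc c)) \<Longrightarrow> block_start x (Suc c) = block_start x c"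
proof -
  assume "\<not> is_block_start (x (Suc c))"
  then have "block_start x (Suc c) \<noteq> Suc c" using block_start_starts[of x "Suc c"] by auto
  then have "block_start x (Suc c) \<le> c" using block_start_le[of x "Suc c"] by simp
  then show ?thesis using block_start_eq[of x "Suc c" c] by simp
qed

lemma block_start_zero: "block_start x 0 = 0"
  using block_start_le[of x 0] by simp

lemma last_mark_height_mark: "is_mark (x c) \<Longrightarrow> last_mark_height x c = height (x c)"
proof -
  assume "is_mark (x c)"
  moreover have "(GREATEST t. t \<le> c \<and> is_mark (x t)) = c"
    by (rule Greatest_equality) (use \<open>is_mark (x c)\<close> in auto)
  ultimately show ?thesis unfolding last_mark_height_def by auto
qed

lemma last_mark_height_Suc: "\<not> is_mark (x (Suc c)) \<Longrightarrow> last_mark_height x (Suc c) = last_mark_height x c"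
proof -
  assume "\<not> is_mark (x (Suc c))"
  then have "(\<lambda>t. t \<le> Suc c \<and> is_mark (x t)) = (\<lambda>t. t \<le> c \<and> is_mark (x t))"
    using le_Suc_eq by auto
  then show ?thesis unfolding last_mark_height_def by (metis (no_types, lifting))
qed

lemma honest_answer_claims:
  assumes "\<And>p. x p < 4 * num_heights n"
  shows "pair_claim n (honest_answer n x c) = honest_pair_claim n x c"
    "mark_claim n (honest_answer n x c) = last_mark_height x c"
    "honest_answer n x c < num_heights n * num_heights n"
proof -
  have k: "last_mark_height x c < num_heights n"
    using assms height_less by (simp add: last_mark_height_def num_heights_def)
  have j: "honest_pair_claim n x c < num_heights n"
    using assms height_less by (simp add: honest_pair_claim_def num_heights_def)
  show "pair_claim n (honest_answer n x c) = honest_pair_claim n x c"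
    "mark_claim n (honest_answer n x c) = last_mark_height x c"
    using k by (simp_all add: honest_answer_def pair_claim_def mark_claim_def)
  have "honest_answer n x c < (honest_pair_claim n x c + 1) * num_heights n"
    using k by (simp add: honest_answer_def)
  also have "\<dots> \<le> num_heights n * num_heights n" using j by (intro mult_le_mono1) simp
  finally show "honest_answer n x c < num_heights n * num_heights n" .
qed

lemma honest_answer_cong:
  assumes same: "\<And>p. p < c + 2 ^ num_heights n \<Longrightarrow> x p = x' p"
  shows "honest_answer n x c = honest_answer n x' c"
proof -
  have "c < c + 2 ^ num_heights n" by simp
  then have le: "x p = x' p" if "p \<le> c" for p by (intro same) (use that in linarith)
  have "(\<lambda>s. s \<le> c \<and> (s = 0 \<or> is_block_start (x s)))
      = (\<lambda>s. s \<le> c \<and> (s = 0 \<or> is_block_start (x' s)))"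
    using le by auto
  then have s: "block_start x c = block_start x' c" unfolding block_start_def by simp
  have ends: "ends_bad_pair n x (block_start x c) b = ends_bad_pair n x' (block_start x' c) b" for b
  proof (cases "b < block_start x c + 2 ^ num_heights n")
    case True
    then have "x p = x' p" if "p \<le> b" for p
      using same block_start_le[of x c] that by simp
    then show ?thesis unfolding ends_bad_pair_def s[symmetric]
      using bad_pair_cong[of b "\<lambda>p. height (x p)" "\<lambda>p. height (x' p)"] by auto
  qed (simp add: ends_bad_pair_def s)
  have "honest_pair_claim n x c = honest_pair_claim n x' c"
  proof (cases "\<exists>b. ends_bad_pair n x (block_start x c) b")
    case True
    define b where "b = (LEAST b. ends_bad_pair n x (block_start x c) b)"
    have "ends_bad_pair n x (block_start x c) b" unfolding b_def using True by (metis LeastI)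
    then have "b < c + 2 ^ num_heights n"
      unfolding ends_bad_pair_def using block_start_le[of x c] by simp
    then show ?thesis unfolding honest_pair_claim_def ends b_def[symmetric] using same
      by (simp add: b_def ends)
  qed (simp add: honest_pair_claim_def ends)
  moreover have "last_mark_height x c = last_mark_height x' c"
  proof -
    have P: "(\<lambda>t. t \<le> c \<and> is_mark (x t)) = (\<lambda>t. t \<le> c \<and> is_mark (x' t))" using le by auto
    have "(GREATEST t. t \<le> c \<and> is_mark (x t)) \<le> c" if "\<exists>t\<le>c. is_mark (x t)"
      using that GreatestI_nat[of "\<lambda>t. t \<le> c \<and> is_mark (x t)"] by blast
    then show ?thesis unfolding last_mark_height_def P[symmetric] using le by auto
  qed
  ultimately show ?thesis unfolding honest_answer_def by simp
qed

lemma sum_honest_delay: "(\<Sum>i\<le>c. honest_delay n i) = 2 ^ num_heights n + c"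
  by (induction c) (auto simp: honest_delay_def)

lemma honest_outcome:
  "game_outcome (honest_delay n) (honest_strategy n) x c = (x c, honest_answer n x c)"
proof -
  have "honest_strategy n (map x [0..<2 ^ num_heights n + c])
      = honest_answer n (\<lambda>p. map x [0..<2 ^ num_heights n + c] ! p) c"
    unfolding honest_strategy_def by simp
  also have "\<dots> = honest_answer n x c" by (rule honest_answer_cong) simp
  finally show ?thesis unfolding game_outcome_def sum_honest_delay by simp
qed

context
  fixes n :: nat and x :: "nat \<Rightarrow> nat"
  assumes letters: "\<And>p. x p < 4 * num_heights n"
begin

abbreviation honest_flags :: "nat \<Rightarrow> flags" where
  "honest_flags \<equiv> flags_run n (\<lambda>c. (x c, honest_answer n x c))"

lemma honest_flags_Suc:
  "honest_flags (Suc c) = flags_step n (honest_flags c) (x c, honest_answer n x c)"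
  by simp

lemma honest_i_open:
  "i_open (honest_flags (Suc c)) \<Longrightarrow>
     open_height (\<lambda>p. height (x p)) (block_start x c) c (last_mark_height x c)"
proof (induction c)
  case 0
  then have "is_mark (x 0)" by simp
  then show ?case using open_height_self[of 0 0 "\<lambda>p. height (x p)"]
    by (simp add: last_mark_height_mark block_start_zero)
next
  case (Suc c)
  show ?case
  proof (cases "is_mark (x (Suc c))")
    case True
    then show ?thesis
      using open_height_self[of "block_start x (Suc c)" "Suc c" "\<lambda>p. height (x p)"]
        block_start_le[of x "Suc c"] by (simp add: last_mark_height_mark)
  next
    case False
    then have k: "last_mark_height x (Suc c) = last_mark_height x c" by (rule last_mark_height_Suc)
    from Suc.prems False have same: "\<not> is_block_start (x (Suc c))"
      and "i_open (honest_flags (Suc c))" and "height (x (Suc c)) < last_mark_height x c"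
      using honest_flags_Suc[of "Suc c"] by (auto simp: honest_answer_claims[OF letters] k)
    with Suc.IH have "open_height (\<lambda>p. height (x p)) (block_start x c) (Suc c) (last_mark_height x c)"
      by (intro open_height_Suc) simp_all
    with same k show ?thesis by (simp add: block_start_Suc)
  qed
qed

lemma honest_i_found:
  "i_found (honest_flags (Suc c)) \<Longrightarrow>
     \<exists>a b. block_start x c \<le> a \<and> b \<le> c \<and> bad_pair (\<lambda>p. height (x p)) a b"
proof (induction c)
  case (Suc c)
  from Suc.prems have same: "\<not> is_block_start (x (Suc c))"
    and "i_found (honest_flags (Suc c)) \<or>
      (\<not> is_mark (x (Suc c)) \<and> i_open (honest_flags (Suc c)) \<and>
       height (x (Suc c)) = last_mark_height x (Suc c))"
    using honest_flags_Suc[of "Suc c"] by (auto simp: honest_answer_claims[OF letters])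
  then consider "i_found (honest_flags (Suc c))"
    | "i_open (honest_flags (Suc c))" "height (x (Suc c)) = last_mark_height x c"
    by (auto simp: last_mark_height_Suc)
  then show ?case
  proof cases
    case 1
    with Suc.IH same show ?thesis by (auto simp: block_start_Suc le_Suc_eq)
  next
    case 2
    then obtain a where "block_start x c \<le> a" "bad_pair (\<lambda>p. height (x p)) a (Suc c)"
      using bad_pair_of_open_height[OF honest_i_open[OF 2(1)]] by auto
    with same show ?thesis by (auto simp: block_start_Suc)
  qed
qed simp

lemma honest_first_pair_end:
  assumes "block_start x c \<le> a" "b \<le> c" "bad_pair (\<lambda>p. height (x p)) a b"
  shows "\<exists>b'\<le>c. ends_bad_pair n x (block_start x c) b'"
proof -
  have inside: "\<forall>t. block_start x c < t \<and> t \<le> b' \<longrightarrow> \<not> is_block_start (x t)" if "b' \<le> c" for b'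
    using not_block_start_after_block_start[of x c] that by simp
  show ?thesis
  proof (cases "c < block_start x c + 2 ^ num_heights n")
    case True
    with assms have "ends_bad_pair n x (block_start x c) b"
      unfolding ends_bad_pair_def using inside[OF assms(2)] by auto
    with assms(2) show ?thesis by blast
  next
    case False
    obtain a' b' where ab': "block_start x c \<le> a'" "b' < block_start x c + 2 ^ num_heights n"
      "bad_pair (\<lambda>p. height (x p)) a' b'"
      using bad_pair_in_long_interval[of "num_heights n" "2 ^ num_heights n" "block_start x c"
          "\<lambda>p. height (x p)"] height_less[OF letters] by auto
    with False have "b' \<le> c" by linarith
    with ab' have "ends_bad_pair n x (block_start x c) b'"
      unfolding ends_bad_pair_def using inside[of b'] by auto
    with \<open>b' \<le> c\<close> show ?thesis by blast
  qed
qed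

lemma honest_flags_track_pair:
  assumes pair: "block_start x c \<le> a" "bad_pair (\<lambda>p. height (x p)) a e"
    and claim: "\<And>d. block_start x c \<le> d \<Longrightarrow> d \<le> c \<Longrightarrow> pair_claim n (honest_answer n x d) = height (x e)"
  shows "a \<le> d \<Longrightarrow> d \<le> c \<Longrightarrow>
    (d < e \<longrightarrow> o_open (honest_flags (Suc d))) \<and> (e \<le> d \<longrightarrow> o_found (honest_flags (Suc d)))"
proof (induction d)
  case 0
  then show ?case using pair claim[of 0] unfolding bad_pair_def by auto
next
  case (Suc d)
  have j: "pair_claim n (honest_answer n x (Suc d)) = height (x e)"
    using claim[of "Suc d"] Suc.prems pair(1) by simp
  show ?case
  proof (cases "a = Suc d")
    case True
    then show ?thesis using pair(2) j unfolding bad_pair_def by auto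
  next
    case False
    with Suc.prems have "a \<le> d" by simp
    with Suc have IH: "(d < e \<longrightarrow> o_open (honest_flags (Suc d))) \<and>
        (e \<le> d \<longrightarrow> o_found (honest_flags (Suc d)))" by simp
    have "\<not> is_block_start (x (Suc d))"
      using not_block_start_after_block_start[of x c "Suc d"] Suc.prems pair(1) \<open>a \<le> d\<close> by simp
    moreover have "height (x (Suc d)) < height (x e)" if "Suc d < e"
      using pair(2) that \<open>a \<le> d\<close> unfolding bad_pair_def by auto
    ultimately show ?thesis using IH j by (auto simp: not_less_eq_eq)
  qed
qed

lemma honest_o_found:
  assumes "block_start x c \<le> a" "b \<le> c" "bad_pair (\<lambda>p. height (x p)) a b"
  shows "o_found (honest_flags (Suc c))"
proof -
  define s where "s = block_start x c"
  define e where "e = (LEAST b. ends_bad_pair n x s b)"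
  have "\<exists>b'\<le>c. ends_bad_pair n x s b'" using honest_first_pair_end[OF assms] unfolding s_def .
  then have ends: "ends_bad_pair n x s e" and "e \<le> c"
    unfolding e_def by (metis LeastI, metis Least_le le_trans)
  then obtain a0 where a0: "s \<le> a0" "bad_pair (\<lambda>p. height (x p)) a0 e"
    unfolding ends_bad_pair_def by blast
  have claim: "pair_claim n (honest_answer n x d) = height (x e)" if "s \<le> d" "d \<le> c" for d
  proof -
    have "block_start x d = s" using block_start_eq[of x c d] that unfolding s_def by simp
    then show ?thesis using ends by (auto simp: honest_answer_claims[OF letters]
          honest_pair_claim_def e_def)
  qed
  have "a0 \<le> c" using a0(2) \<open>e \<le> c\<close> unfolding bad_pair_def by simp
  with honest_flags_track_pair[OF a0[unfolded s_def] claim[unfolded s_def]] \<open>e \<le> c\<close>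
  show ?thesis by blast
qed

lemma honest_never_fails: "\<not> failed n (\<lambda>c. (x c, honest_answer n x c)) c"
proof -
  have "\<not> violation n (honest_flags d) (x d, honest_answer n x d)" for d
  proof (cases d)
    case 0
    then show ?thesis using last_mark_height_mark[of x 0] by (simp add: honest_answer_claims[OF letters])
  next
    case (Suc d')
    have "i_found (honest_flags d) \<longrightarrow> o_found (honest_flags d)"
      using honest_i_found[of d'] honest_o_found[of d'] Suc by blast
    then show ?thesis using last_mark_height_mark[of x d] by (auto simp: honest_answer_claims[OF letters])
  qed
  then show ?thesis unfolding failed_def by simp
qed

lemma honest_steady: "\<not> unjustified_change n (\<lambda>c. (x c, honest_answer n x c)) c"
  using block_start_Suc[of x c] last_mark_height_Suc[of x c]
  by (auto simp: unjustified_change_def honest_answer_claims[OF letters] honest_pair_claim_def)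

end

lemma honest_strategy_wins:
  assumes n: "1 \<le> n"
  shows "winning_strategy {..<4 * num_heights n} (honest_delay n) (sc_lang (cost_aut n)) (honest_strategy n)"
    and "strategy_cost (cost_aut n) {..<4 * num_heights n} (honest_delay n) (honest_strategy n) = enat n"
proof -
  let ?W = "game_outcomes {..<4 * num_heights n} (honest_delay n) (honest_strategy n)"
  have outcome: "w \<in> sc_lang (cost_aut n) \<and> run_limsup (cost_aut n) w = enat n" if play: "w \<in> ?W" for w
  proof -
    obtain x where w: "w = game_outcome (honest_delay n) (honest_strategy n) x"
      and letters: "\<And>p. x p < 4 * num_heights n"
      using play unfolding game_outcomes_def by auto
    have w_eq: "w = (\<lambda>c. (x c, honest_answer n x c))" using w honest_outcome by auto
    have range: "snd (w c) < num_heights n * num_heights n" for c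
      unfolding w_eq using honest_answer_claims(3)[OF letters] by simp
    have "run_limsup (cost_aut n) w = enat n"
      unfolding w_eq using honest_never_fails[OF letters] honest_steady[OF letters] range
      by (intro run_limsup_steady n) (simp_all add: w_eq)
    moreover have "w c \<in> st_alph (cost_aut n)" for c using letters range by (simp add: w_eq)
    ultimately show ?thesis by (simp add: sc_lang_def)
  qed
  then show "winning_strategy {..<4 * num_heights n} (honest_delay n) (sc_lang (cost_aut n)) (honest_strategy n)"
    unfolding winning_strategy_def by blast
  have "?W \<noteq> {}" unfolding game_outcomes_def by (auto simp: num_heights_def intro!: exI[of _ "\<lambda>_. 0"])
  with outcome show "strategy_cost (cost_aut n) {..<4 * num_heights n} (honest_delay n) (honest_strategy n) = enat n"
    unfolding strategy_cost_def by (simp add: SUP_constant)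
qed

section \<open>Less lookahead does not suffice\<close>

definition lookahead :: "(nat \<Rightarrow> nat) \<Rightarrow> nat \<Rightarrow> nat" where
  "lookahead f i = (\<Sum>i'\<le>i. (f i' - 1))"

lemma sum_delay: "(\<And>i. f i \<noteq> 0) \<Longrightarrow> (\<Sum>i'\<le>c. f i') = Suc c + lookahead f c"
  by (induction c) (simp_all add: lookahead_def)

primrec block_pos :: "(nat \<Rightarrow> nat) \<Rightarrow> nat \<Rightarrow> nat" where
  "block_pos f 0 = 0"
| "block_pos f (Suc m) = block_pos f m + lookahead f (block_pos f m) + 3"

definition block_index :: "(nat \<Rightarrow> nat) \<Rightarrow> nat \<Rightarrow> nat" where
  "block_index f p = (GREATEST m. block_pos f m \<le> p)"

definition other_height :: "nat \<Rightarrow> nat" where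
  "other_height j = of_bool (j = 0)"

text \<open>Player O answers at the start \<open>s\<close> of a block after seeing the letters up to
  \<open>s + lookahead f s\<close>. The adversary fills these positions with the ruler sequence, which has
  no bad pair, and then adds a mark and a plain letter of a height different from the one
  O claimed at \<open>s\<close>: a bad pair that O did not claim.\<close>
definition adversary_letter :: "nat \<Rightarrow> (nat \<Rightarrow> nat) \<Rightarrow> (nat list \<Rightarrow> nat) \<Rightarrow> nat list \<Rightarrow> nat \<Rightarrow> nat" where
  "adversary_letter n f tau xs p =
     (let s = block_pos f (block_index f p); L = lookahead f s; r = p - s in
      if r \<le> L then 4 * multiplicity 2 (Suc r) + of_bool (r = 0)
      else 4 * other_height (pair_claim n (tau (take (s + L + 1) xs))) + (if r = L + 1 then 2 else 0))"

primrec adversary_prefix :: "nat \<Rightarrow> (nat \<Rightarrow> nat) \<Rightarrow> (nat list \<Rightarrow> nat) \<Rightarrow> nat \<Rightarrow> nat list" where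
  "adversary_prefix n f tau 0 = []"
| "adversary_prefix n f tau (Suc p) =
     adversary_prefix n f tau p @ [adversary_letter n f tau (adversary_prefix n f tau p) p]"

definition adversary :: "nat \<Rightarrow> (nat \<Rightarrow> nat) \<Rightarrow> (nat list \<Rightarrow> nat) \<Rightarrow> nat \<Rightarrow> nat" where
  "adversary n f tau p = adversary_letter n f tau (adversary_prefix n f tau p) p"

lemma adversary_prefix_eq: "adversary_prefix n f tau p = map (adversary n f tau) [0..<p]"
  by (induction p) (simp_all add: adversary_def)

lemma block_pos_ge: "m \<le> block_pos f m"
  by (induction m) auto

lemma block_pos_mono: "m \<le> m' \<Longrightarrow> block_pos f m \<le> block_pos f m'"
  by (induction m') (auto simp: le_Suc_eq)

lemma block_index:
  shows "block_pos f (block_index f p) \<le> p" and "p < block_pos f (Suc (block_index f p))"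
proof -
  have bound: "m \<le> p" if "block_pos f m \<le> p" for m using block_pos_ge[of m f] that by simp
  show "block_pos f (block_index f p) \<le> p"
    unfolding block_index_def by (rule GreatestI_nat[of _ 0 p]) (use bound in auto)
  show "p < block_pos f (Suc (block_index f p))"
  proof (rule ccontr)
    assume "\<not> ?thesis"
    then have "Suc (block_index f p) \<le> block_index f p"
      unfolding block_index_def by (intro Greatest_le_nat[of _ _ p]) (use bound block_index_def in auto)
    then show False by simp
  qed
qed

lemma block_index_eq:
  assumes "block_pos f m \<le> p" "p < block_pos f (Suc m)"
  shows "block_index f p = m"
proof (rule antisym)
  show "block_index f p \<le> m"
    using block_pos_mono[of "Suc m" "block_index f p" f] block_index(1)[of f p] assms(2)
    by (meson not_less_eq_eq order_le_less_trans not_le)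
  show "m \<le> block_index f p"
    using block_pos_mono[of "Suc (block_index f p)" m f] block_index(2)[of p f] assms(1)
    by (meson not_less_eq_eq order_le_less_trans not_le)
qed

lemma letter_height: "e < 4 \<Longrightarrow> height (4 * t + e) = t"
  by (simp add: height_def)

lemma letter_flags:
  "is_block_start (4 * t + 1)" "\<not> is_block_start (4 * t)" "\<not> is_block_start (4 * t + 2)"
  "is_mark (4 * t + 2)" "\<not> is_mark (4 * t)" "\<not> is_mark (4 * t + 1)"
  by (simp_all add: is_block_start_def is_mark_def)

lemma lookahead_bound_less: "n * (2 ^ 2 ^ n - 1) < 2 ^ num_heights n"
proof -
  have "n * (2 ^ 2 ^ n - 1) < 2 ^ n * 2 ^ 2 ^ n"
    using less_exp[of n] one_less_power[of "2::nat" "2 ^ n"] by (intro mult_less_le_imp_less) auto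
  then show ?thesis by (simp add: num_heights_def power_add mult.commute)
qed

context
  fixes n :: nat and f :: "nat \<Rightarrow> nat" and tau :: "nat list \<Rightarrow> nat"
  assumes n: "1 \<le> n" and delay: "\<And>i. f i \<noteq> 0"
    and short: "\<And>i. lookahead f i < n * (2 ^ 2 ^ n - 1)"
begin

abbreviation adv :: "nat \<Rightarrow> nat" where
  "adv \<equiv> adversary n f tau"

abbreviation adv_play :: "nat \<Rightarrow> nat \<times> nat" where
  "adv_play \<equiv> game_outcome f tau adv"

lemma adv_play_fst [simp]: "fst (adv_play c) = adv c"
  by (simp add: game_outcome_def)

lemma adv_play_snd: "snd (adv_play c) = tau (map adv [0..<Suc c + lookahead f c])"
  by (simp add: game_outcome_def sum_delay[OF delay])

lemma adv_flags_Suc: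
  "flags_run n adv_play (Suc c) = flags_step n (flags_run n adv_play c) (adv c, snd (adv_play c))"
  by (simp add: game_outcome_def)

lemma adv_violation:
  "violation n F (adv_play c) \<longleftrightarrow> violation n F (adv c, snd (adv_play c))"
  by (simp add: game_outcome_def)

lemma lookahead_less: "Suc (lookahead f i) < 2 ^ num_heights n"
  using short[of i] lookahead_bound_less[of n] by linarith

lemma adv_ruler:
  assumes "r \<le> lookahead f (block_pos f m)"
  shows "adv (block_pos f m + r) = 4 * multiplicity 2 (Suc r) + of_bool (r = 0)"
proof -
  have "block_index f (block_pos f m + r) = m" by (rule block_index_eq) (use assms in auto)
  with assms show ?thesis by (simp add: adversary_def adversary_letter_def Let_def)
qed

lemma adv_tail:
  assumes "r = lookahead f (block_pos f m) + 1 \<or> r = lookahead f (block_pos f m) + 2"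
  shows "adv (block_pos f m + r) =
    4 * other_height (pair_claim n (snd (adv_play (block_pos f m))))
    + (if r = lookahead f (block_pos f m) + 1 then 2 else 0)"
proof -
  define s where "s = block_pos f m"
  define L where "L = lookahead f s"
  have index: "block_index f (s + r) = m" unfolding s_def by (rule block_index_eq) (use assms in auto)
  have tail: "\<not> r \<le> L" "s + L + 1 \<le> s + r" using assms unfolding L_def s_def by auto
  have "take (s + L + 1) (adversary_prefix n f tau (s + r)) = map adv [0..<Suc s + L]"
    using tail(2) unfolding adversary_prefix_eq take_map take_upt by (simp add: min_def)
  then have "tau (take (s + L + 1) (adversary_prefix n f tau (s + r))) = snd (adv_play s)"
    unfolding adv_play_snd L_def by simp
  moreover have "adv (s + r) = 4 * other_height (pair_claim n (tau (take (s + L + 1)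
      (adversary_prefix n f tau (s + r))))) + (if r = L + 1 then 2 else 0)"
    unfolding adversary_def adversary_letter_def Let_def index s_def[symmetric] L_def[symmetric]
    using tail(1) by simp
  ultimately show ?thesis unfolding s_def L_def by simp
qed

lemma adv_range: "adv p < 4 * num_heights n"
proof -
  define m where "m = block_index f p"
  define s where "s = block_pos f m"
  define L where "L = lookahead f s"
  have "s \<le> p" "p < s + L + 3"
    using block_index[where f = f and p = p] unfolding m_def s_def L_def by auto
  then consider (ruler) "p - s \<le> L" | (tail) "p - s = L + 1 \<or> p - s = L + 2" by linarith
  then show ?thesis
  proof cases
    case ruler
    then have "multiplicity 2 (Suc (p - s)) < num_heights n"
      using lookahead_less[of s] unfolding L_def by (intro multiplicity_two_less) auto
    then show ?thesis using adv_ruler[of "p - s" m] ruler \<open>s \<le> p\<close> unfolding L_def s_def by auto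
  next
    case tail
    have "1 \<le> (2::nat) ^ n" by simp
    with n have "2 \<le> num_heights n" unfolding num_heights_def by linarith
    then show ?thesis using adv_tail[of "p - s" m] tail \<open>s \<le> p\<close>
      unfolding L_def s_def by (auto simp: other_height_def)
  qed
qed

lemma adv_ruler_no_bad_pair:
  assumes "block_pos f m \<le> a" "b \<le> block_pos f m + lookahead f (block_pos f m)"
  shows "\<not> bad_pair (\<lambda>p. height (adv p)) a b"
proof
  define s where "s = block_pos f m"
  have h: "height (adv (s + t)) = multiplicity 2 (Suc t)" if "t \<le> lookahead f s" for t
    using adv_ruler[of t m] that letter_height unfolding s_def by simp
  assume bad: "bad_pair (\<lambda>p. height (adv p)) a b"
  then have ab: "a - s \<le> lookahead f s" "b - s \<le> lookahead f s"
    using assms unfolding bad_pair_def s_def by auto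
  have "bad_pair (\<lambda>r. multiplicity 2 (Suc r)) (a - s) (b - s)"
    unfolding bad_pair_def
  proof (intro conjI allI impI)
    show "a - s < b - s" using bad assms unfolding bad_pair_def s_def by (simp add: diff_less_mono)
    show "multiplicity 2 (Suc (a - s)) = multiplicity (2::nat) (Suc (b - s))"
      using bad assms h[OF ab(1)] h[OF ab(2)] unfolding bad_pair_def s_def by simp
    fix d assume d: "a - s < d \<and> d < b - s"
    then have "a < s + d" "s + d < b" using assms unfolding s_def by auto
    then have "height (adv (s + d)) < height (adv a)" using bad unfolding bad_pair_def by blast
    then show "multiplicity (2::nat) (Suc d) < multiplicity 2 (Suc (a - s))"
      using d ab h[of d] h[OF ab(1)] assms(1) unfolding s_def by simp
  qed
  then show False using ruler_no_bad_pair by blast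
qed

lemma adv_no_block_start:
  assumes "1 \<le> r" "r \<le> lookahead f (block_pos f m) + 2"
  shows "\<not> is_block_start (adv (block_pos f m + r))"
proof (cases "r \<le> lookahead f (block_pos f m)")
  case True
  then show ?thesis using adv_ruler[of r m] assms(1) by (simp add: is_block_start_def)
next
  case False
  with assms(2) consider "r = lookahead f (block_pos f m) + 1" | "r = lookahead f (block_pos f m) + 2"
    by linarith
  then show ?thesis using adv_tail[of r m] by cases (simp_all add: is_block_start_def)
qed

context
  fixes m :: nat
  assumes steady: "\<And>c. block_pos f m \<le> c \<Longrightarrow> c \<le> block_pos f m + lookahead f (block_pos f m) + 1
    \<Longrightarrow> \<not> unjustified_change n adv_play c"
begin

lemma adv_pair_claim_constant:
  "r \<le> lookahead f (block_pos f m) + 2 \<Longrightarrow>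
    pair_claim n (snd (adv_play (block_pos f m + r))) = pair_claim n (snd (adv_play (block_pos f m)))"
proof (induction r)
  case (Suc r)
  have "\<not> unjustified_change n adv_play (block_pos f m + r)" using steady Suc.prems by simp
  moreover have "\<not> is_block_start (adv (block_pos f m + Suc r))"
    using adv_no_block_start[of "Suc r" m] Suc.prems by simp
  ultimately show ?case using Suc by (simp add: unjustified_change_def)
qed simp

lemma adv_mark_claim_constant:
  defines "c \<equiv> block_pos f m + lookahead f (block_pos f m) + 1"
  shows "mark_claim n (snd (adv_play (Suc c))) = mark_claim n (snd (adv_play c))"
proof -
  have "adv (Suc c) = 4 * other_height (pair_claim n (snd (adv_play (block_pos f m))))"
    using adv_tail[of "lookahead f (block_pos f m) + 2" m] unfolding c_def by simp
  then have "\<not> is_mark (adv (Suc c))" using letter_flags by simp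
  moreover have "\<not> unjustified_change n adv_play c" using steady unfolding c_def by simp
  ultimately show ?thesis by (auto simp: unjustified_change_def)
qed

text \<open>On the ruler part O's claimed height \<open>J\<close> never closes a bad pair, so \<open>o_found\<close>
  stays false there.\<close>
lemma adv_not_o_found:
  defines "s \<equiv> block_pos f m" and "J \<equiv> pair_claim n (snd (adv_play (block_pos f m)))"
  assumes "r \<le> lookahead f s"
  shows "(o_open (flags_run n adv_play (Suc (s + r))) \<longrightarrow> open_height (\<lambda>p. height (adv p)) s (s + r) J)
    \<and> \<not> o_found (flags_run n adv_play (Suc (s + r)))"
  using assms(3)
proof (induction r)
  case 0
  have "is_block_start (adv s)" using adv_ruler[of 0 m] unfolding s_def by (simp add: is_block_start_def)
  moreover have "open_height (\<lambda>p. height (adv p)) s s (height (adv s))" by (rule open_height_self) simp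
  ultimately show ?case unfolding J_def s_def
    by (simp del: flags_run.simps add: adv_flags_Suc) (rule impI, erule subst)
next
  case (Suc r)
  define c where "c = s + Suc r"
  have same: "\<not> is_block_start (adv c)"
    using adv_no_block_start[of "Suc r" m] Suc.prems unfolding c_def s_def by simp
  have j: "pair_claim n (snd (adv_play c)) = J"
    using adv_pair_claim_constant[of "Suc r"] Suc.prems unfolding c_def s_def J_def by simp
  have IH: "(o_open (flags_run n adv_play c) \<longrightarrow> open_height (\<lambda>p. height (adv p)) s (s + r) J)
    \<and> \<not> o_found (flags_run n adv_play c)"
    using Suc unfolding c_def by simp
  have no_close: "\<not> (height (adv c) = J \<and> o_open (flags_run n adv_play c))"
  proof
    assume "height (adv c) = J \<and> o_open (flags_run n adv_play c)"
    with IH obtain a where "s \<le> a" "bad_pair (\<lambda>p. height (adv p)) a c"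
      using bad_pair_of_open_height[of "\<lambda>p. height (adv p)" s "s + r" J] unfolding c_def by auto
    with Suc.prems show False using adv_ruler_no_bad_pair[of m a c] unfolding c_def s_def by simp
  qed
  have "o_open (flags_run n adv_play (Suc c)) \<longrightarrow> open_height (\<lambda>p. height (adv p)) s c J"
  proof
    assume "o_open (flags_run n adv_play (Suc c))"
    then have "height (adv c) = J \<or> (height (adv c) < J \<and> o_open (flags_run n adv_play c))"
      using same j by (simp del: flags_run.simps add: adv_flags_Suc)
    with IH show "open_height (\<lambda>p. height (adv p)) s c J"
      using open_height_self[of s c "\<lambda>p. height (adv p)"]
        open_height_Suc[of "\<lambda>p. height (adv p)" s "s + r" J] unfolding c_def by auto
  qed
  moreover have "\<not> o_found (flags_run n adv_play (Suc c))"
    using no_close IH same j by (simp del: flags_run.simps add: adv_flags_Suc)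
  ultimately show ?case unfolding c_def by simp
qed

lemma adv_steady_block_fails: "failed n adv_play (Suc (block_pos f (Suc m)))"
proof -
  define s where "s = block_pos f m"
  define L where "L = lookahead f s"
  define J where "J = pair_claim n (snd (adv_play s))"
  define z where "z = other_height J"
  define F where "F = flags_run n adv_play"
  define c where "c = s + L + 1"
  have next_block: "block_pos f (Suc m) = Suc (Suc c)" unfolding c_def L_def s_def by simp
  have zJ: "z \<noteq> J" unfolding z_def other_height_def by simp
  have letters: "adv c = 4 * z + 2" "adv (Suc c) = 4 * z"
    using adv_tail[of "L + 1" m] adv_tail[of "L + 2" m]
    unfolding c_def z_def J_def L_def s_def by (simp_all add: add.assoc)
  have heights: "height (adv c) = z" "height (adv (Suc c)) = z"
    unfolding letters using letter_height[of 2 z] letter_height[of 0 z] by simp_all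
  have claims: "pair_claim n (snd (adv_play c)) = J" "pair_claim n (snd (adv_play (Suc c))) = J"
    using adv_pair_claim_constant[of "L + 1"] adv_pair_claim_constant[of "L + 2"]
    unfolding c_def J_def L_def s_def by (simp_all add: add.assoc)
  have "\<not> o_found (F c)" using adv_not_o_found[of L] unfolding F_def c_def L_def s_def by simp
  then have not_found: "\<not> o_found (F (Suc (Suc c)))"
    using heights claims zJ letters letter_flags by (simp del: flags_run.simps add: F_def adv_flags_Suc)
  show ?thesis
  proof (cases "violation n (F c) (adv_play c)")
    case True
    then have "failed n adv_play (Suc c)" unfolding failed_def F_def by blast
    then show ?thesis by (rule failed_mono) (unfold next_block, simp)
  next
    case False
    then have "mark_claim n (snd (adv_play c)) = z"
      using letters heights letter_flags by (simp add: adv_violation)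
    then have "mark_claim n (snd (adv_play (Suc c))) = z"
      using adv_mark_claim_constant unfolding c_def L_def s_def by simp
    then have "i_found (F (Suc (Suc c)))"
      using letters heights letter_flags by (simp del: flags_run.simps add: F_def adv_flags_Suc)
    moreover have "adv (block_pos f (Suc m)) = 1" using adv_ruler[of 0 "Suc m"] by simp
    then have "is_block_start (adv (Suc (Suc c)))" unfolding next_block by (simp add: is_block_start_def)
    ultimately have "violation n (F (Suc (Suc c))) (adv_play (Suc (Suc c)))"
      using not_found by (simp add: adv_violation)
    then show ?thesis unfolding failed_def F_def next_block by blast
  qed
qed

end

lemma adversary_defeats_cost_n:
  assumes win: "winning_strategy {..<4 * num_heights n} f (sc_lang (cost_aut n)) tau"
  shows "strategy_cost (cost_aut n) {..<4 * num_heights n} f tau \<noteq> enat n"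
proof
  assume cost: "strategy_cost (cost_aut n) {..<4 * num_heights n} f tau = enat n"
  have play: "adv_play \<in> game_outcomes {..<4 * num_heights n} f tau"
    unfolding game_outcomes_def using adv_range by (auto intro!: exI[of _ adv])
  with win have "adv_play \<in> sc_lang (cost_aut n)" unfolding winning_strategy_def by blast
  then have range: "\<And>c. snd (adv_play c) < num_heights n * num_heights n"
    and finite: "run_limsup (cost_aut n) adv_play < \<infinity>"
    unfolding sc_lang_def by (auto simp: mem_Times_iff)
  have nf: "\<not> failed n adv_play c" for c
  proof
    assume "failed n adv_play c"
    then show False using run_limsup_failed finite by simp
  qed
  have often: "\<exists>c\<ge>c0. unjustified_change n adv_play c" for c0
  proof -
    obtain c where "block_pos f c0 \<le> c" "unjustified_change n adv_play c"
      using adv_steady_block_fails[of c0] nf by blast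
    then show ?thesis using block_pos_ge[of c0 f] by (intro exI[of _ c]) auto
  qed
  have "enat (Suc n) \<le> run_limsup (cost_aut n) adv_play"
    by (rule run_limsup_unsteady[OF nf n range often])
  also have "\<dots> \<le> strategy_cost (cost_aut n) {..<4 * num_heights n} f tau"
    unfolding strategy_cost_def using play by (rule SUP_upper)
  finally show False using cost by simp
qed

end

lemma cost_n_strategy_needs_lookahead:
  assumes n: "1 \<le> n" and "delay_fun f"
    and win: "winning_strategy {..<4 * num_heights n} f (sc_lang (cost_aut n)) tau"
    and cost: "strategy_cost (cost_aut n) {..<4 * num_heights n} f tau = enat n"
  shows "grants_lookahead f (n * (2 ^ 2 ^ n - 1))"
proof (rule ccontr)
  assume "\<not> grants_lookahead f (n * (2 ^ 2 ^ n - 1))"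
  then have "lookahead f i < n * (2 ^ 2 ^ n - 1)" for i
    by (simp add: grants_lookahead_def lookahead_def not_le)
  moreover have "f i \<noteq> 0" for i using \<open>delay_fun f\<close> by (simp add: delay_fun_def)
  ultimately show False using adversary_defeats_cost_n[OF n _ _ win] cost by blast
qed

theorem theorem8:
  shows "\<exists>p :: nat poly. \<forall>n > 0. \<exists>(SI :: nat set) (SO :: nat set) (A :: (nat \<times> nat) streett_cost).
     finite SI \<and> finite SO \<and> SI \<noteq> {} \<and> SO \<noteq> {} \<and>
     wf_streett_cost A \<and> st_alph A = SI \<times> SO \<and> sc_size A \<le> poly p n \<and>
     (\<exists>f tau. delay_fun f \<and> winning_strategy SI f (sc_lang A) tau \<and>
              strategy_cost A SI f tau = enat n) \<and>
     (\<forall>f. delay_fun f \<longrightarrow>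
        (\<forall>tau. winning_strategy SI f (sc_lang A) tau \<and> strategy_cost A SI f tau = enat n \<longrightarrow>
           grants_lookahead f (n * (2 ^ (2 ^ n) - 1))))"
proof (intro exI[of _ "[:42, 28, 4:]"] allI impI)
  fix n :: nat
  assume "0 < n"
  then have n: "1 \<le> n" by simp
  have "0 < num_heights n" by (simp add: num_heights_def)
  moreover have "delay_fun (honest_delay n)" by (simp add: delay_fun_def honest_delay_def)
  ultimately show "\<exists>(SI :: nat set) (SO :: nat set) (A :: (nat \<times> nat) streett_cost).
     finite SI \<and> finite SO \<and> SI \<noteq> {} \<and> SO \<noteq> {} \<and>
     wf_streett_cost A \<and> st_alph A = SI \<times> SO \<and> sc_size A \<le> poly [:42, 28, 4:] n \<and>
     (\<exists>f tau. delay_fun f \<and> winning_strategy SI f (sc_lang A) tau \<and>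
              strategy_cost A SI f tau = enat n) \<and>
     (\<forall>f. delay_fun f \<longrightarrow>
        (\<forall>tau. winning_strategy SI f (sc_lang A) tau \<and> strategy_cost A SI f tau = enat n \<longrightarrow>
           grants_lookahead f (n * (2 ^ (2 ^ n) - 1))))"
    using wf_cost_aut[of n] cost_aut_size[of n] honest_strategy_wins[OF n]
      cost_n_strategy_needs_lookahead[OF n]
    by (intro exI[of _ "{..<4 * num_heights n}"] exI[of _ "{..<num_heights n * num_heights n}"]
        exI[of _ "cost_aut n"] conjI) (simp_all add: lessThan_empty_iff, blast+)
qed

end
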